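(* Let $(E,\mathscr{T},\le)$ be a locally compact $T_2$-preordered Tychonoff space with $G(\le)=\bigcap_{f\in\mathcal{F}}G_f$, and let $\mathcal{H}_1\subseteq\mathcal{H}_2\subseteq\mathcal{F}$ with $G(\le)=\bigcap_{h\in\mathcal{H}_1}G_h$. Then the $\mathcal{H}_2$-compactification dominates the $\mathcal{H}_1$-compactification.
   Context: $T_2$-preordered: the graph $G(\le)=\{(x,y):x\le y\}$ is closed in $E\times E$. $\mathcal{F}$ is the family of continuous isotone functions $f:E\to[0,1]$; $G_f=\{(x,y):f(x)\le f(y)\}$. $\mathcal{C}$ is the family of continuous functions $E\to[0,1]$ constant outside a compact set. For $\mathcal{H}\subseteq\mathcal{F}$ with $G(\le)=\bigcap_{h\in\mathcal{H}}G_h$, the $\mathcal{H}$-compactification is $c:E\to[0,1]^{\mathcal{H}\cup\mathcal{C}}$, $c(x)=(g(x))_{g\in\mathcal{H}\cup\mathcal{C}}$, with $cE$ the closure of $c(E)$ with the induced product topology and preorder $x\le_c y$ iff $x_h\le y_h$ for all $h\in\mathcal{H}$. For preorder compactifications $c_1,c_2$ of $E$, $c_2$ dominates $c_1$ if there is a continuous isotone map $C:c_2E\to c_1E$ with $C\circ c_2=c_1$. *)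

theory Defs
  imports "HOL-Analysis.Analysis"
begin

text \<open>The space E is the type 'a with its topology (euclidean); the preorder is the
relation le.\<close>

definition isotone :: "('a \<Rightarrow> 'a \<Rightarrow> bool) \<Rightarrow> ('a \<Rightarrow> real) \<Rightarrow> bool" where
  "isotone le f \<longleftrightarrow> (\<forall>x y. le x y \<longrightarrow> f x \<le> f y)"

definition graph_rel :: "('a \<Rightarrow> 'a \<Rightarrow> bool) \<Rightarrow> ('a \<times> 'a) set" where
  "graph_rel le = {(x, y). le x y}"

definition graph_fun :: "('a \<Rightarrow> real) \<Rightarrow> ('a \<times> 'a) set" where
  "graph_fun f = {(x, y). f x \<le> f y}"

definition iso_family :: "('a::topological_space \<Rightarrow> 'a \<Rightarrow> bool) \<Rightarrow> ('a \<Rightarrow> real) set" where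
  "iso_family le = {f. continuous_map euclidean (top_of_set {0..1}) f \<and> isotone le f}"

definition cc_family :: "('a::topological_space \<Rightarrow> real) set" where
  "cc_family = {g. continuous_map euclidean (top_of_set {0..1}) g \<and>
      (\<exists>K c. compact K \<and> (\<forall>x. x \<notin> K \<longrightarrow> g x = c))}"

definition cube :: "('a::topological_space \<Rightarrow> real) set \<Rightarrow> (('a \<Rightarrow> real) \<Rightarrow> real) topology" where
  "cube H = product_topology (\<lambda>_. top_of_set {0..1}) (H \<union> cc_family)"

definition hcomp_map :: "('a::topological_space \<Rightarrow> real) set \<Rightarrow> 'a \<Rightarrow> (('a \<Rightarrow> real) \<Rightarrow> real)" where
  "hcomp_map H x = restrict (\<lambda>g. g x) (H \<union> cc_family)"

definition hcomp_top :: "('a::topological_space \<Rightarrow> real) set \<Rightarrow> (('a \<Rightarrow> real) \<Rightarrow> real) topology" where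
  "hcomp_top H = subtopology (cube H) ((cube H) closure_of (range (hcomp_map H)))"

definition hcomp_le :: "('a \<Rightarrow> real) set \<Rightarrow> (('a \<Rightarrow> real) \<Rightarrow> real) \<Rightarrow> (('a \<Rightarrow> real) \<Rightarrow> real) \<Rightarrow> bool" where
  "hcomp_le H p q \<longleftrightarrow> (\<forall>h\<in>H. p h \<le> q h)"

definition dominates ::
  "('a \<Rightarrow> 'b) \<Rightarrow> 'b topology \<Rightarrow> ('b \<Rightarrow> 'b \<Rightarrow> bool) \<Rightarrow>
   ('a \<Rightarrow> 'c) \<Rightarrow> 'c topology \<Rightarrow> ('c \<Rightarrow> 'c \<Rightarrow> bool) \<Rightarrow> bool" where
  "dominates c2 T2 le2 c1 T1 le1 \<longleftrightarrow>
     (\<exists>C. continuous_map T2 T1 C \<and>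
          (\<forall>p\<in>topspace T2. \<forall>q\<in>topspace T2. le2 p q \<longrightarrow> le1 (C p) (C q)) \<and>
          (\<forall>x. C (c2 x) = c1 x))"

end

theory Submission
  imports Defs
begin

text \<open>Forgetting the coordinates indexed by \<open>H\<^sub>2 - H\<^sub>1\<close> is a continuous projection of the cube
  \<open>[0,1]^(H\<^sub>2 \<union> C)\<close> onto \<open>[0,1]^(H\<^sub>1 \<union> C)\<close> that carries \<open>c\<^sub>2\<close> to \<open>c\<^sub>1\<close>. By continuity it maps the
  closure of \<open>c\<^sub>2(E)\<close> into the closure of \<open>c\<^sub>1(E)\<close>, and it is isotone because the preorder on
  \<open>c\<^sub>1E\<close> only compares the \<open>H\<^sub>1\<close>-coordinates, which are among those compared on \<open>c\<^sub>2E\<close>.\<close>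

lemma continuous_map_closure_of_subtopology:
  assumes "continuous_map X Y f" and "f ` S \<subseteq> T"
  shows "continuous_map (subtopology X (X closure_of S)) (subtopology Y (Y closure_of T)) f"
proof -
  have "f ` (X closure_of S) \<subseteq> Y closure_of (f ` S)"
    using continuous_map_image_closure_subset[OF assms(1)] .
  also have "\<dots> \<subseteq> Y closure_of T"
    using assms(2) by (rule closure_of_mono)
  finally show ?thesis
    unfolding continuous_map_in_subtopology
    using continuous_map_from_subtopology[OF assms(1)] by auto
qed

lemma hcomp_map_restrict:
  assumes "H1 \<subseteq> H2"
  shows "restrict (hcomp_map H2 x) (H1 \<union> cc_family) = hcomp_map H1 x"
  using assms unfolding hcomp_map_def by (intro ext) auto

lemma continuous_map_hcomp_restrict:
  assumes "H1 \<subseteq> H2"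
  shows "continuous_map (hcomp_top H2) (hcomp_top H1) (\<lambda>p. restrict p (H1 \<union> cc_family))"
proof -
  have "continuous_map (cube H2) (cube H1) (\<lambda>p. restrict p (H1 \<union> cc_family))"
    unfolding cube_def using assms by (intro continuous_on_restrict) auto
  moreover have "(\<lambda>p. restrict p (H1 \<union> cc_family)) ` range (hcomp_map H2) \<subseteq> range (hcomp_map H1)"
    using hcomp_map_restrict[OF assms] by auto
  ultimately show ?thesis
    unfolding hcomp_top_def by (rule continuous_map_closure_of_subtopology)
qed

lemma hcomp_le_restrict:
  assumes "H1 \<subseteq> H2" and "hcomp_le H2 p q"
  shows "hcomp_le H1 (restrict p (H1 \<union> cc_family)) (restrict q (H1 \<union> cc_family))"
  using assms unfolding hcomp_le_def by auto

lemma dominates_hcomp_subset: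
  assumes "H1 \<subseteq> H2"
  shows "dominates (hcomp_map H2) (hcomp_top H2) (hcomp_le H2)
                   (hcomp_map H1) (hcomp_top H1) (hcomp_le H1)"
  unfolding dominates_def
  using continuous_map_hcomp_restrict[OF assms] hcomp_le_restrict[OF assms]
    hcomp_map_restrict[OF assms] by blast

theorem mainTheorem13:
  fixes le :: "'a::topological_space \<Rightarrow> 'a \<Rightarrow> bool"
    and H1 H2 :: "('a \<Rightarrow> real) set"
  assumes refl: "\<And>x. le x x"
    and trans: "\<And>x y z. le x y \<Longrightarrow> le y z \<Longrightarrow> le x z"
    and lc: "locally_compact_space (euclidean :: 'a topology)"
    and T2pre: "closed (graph_rel le)"
    and tych: "completely_regular_space (euclidean :: 'a topology)"
              "t1_space (euclidean :: 'a topology)"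
    and GF: "graph_rel le = (\<Inter>f\<in>iso_family le. graph_fun f)"
    and sub: "H1 \<subseteq> H2" "H2 \<subseteq> iso_family le"
    and GH1: "graph_rel le = (\<Inter>h\<in>H1. graph_fun h)"
  shows "dominates (hcomp_map H2) (hcomp_top H2) (hcomp_le H2)
                   (hcomp_map H1) (hcomp_top H1) (hcomp_le H1)"
  using sub(1) by (rule dominates_hcomp_subset)

end
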